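(* Let $V\subset\mathbb{R}^d$ be a finite antichain, $p\in S_V$, and let $F$ be an $i$-flat of $S_V$. Then $p\in F$ if and only if there exist $v\in V_F$ and $q\in S_V$ such that $q\rhd_i v$ and $v\le p\le q$.
   Context: For $x,y\in\mathbb{R}^d$, $x\le y$ (dominance order) means $x_i\le y_i$ for all $i$; $y\rhd x$ means $y_i>x_i$ for all $i$; $y\rhd_i x$ means $y_i=x_i$ and $y_j>x_j$ for all $j\neq i$. $V\subset\mathbb{R}^d$ is a finite antichain in the dominance order (elements are called minima). The orthogonal surface $S_V$ is the topological boundary of $\langle V\rangle=\{x: x\ge v\text{ for some }v\in V\}$; equivalently $p\in S_V$ iff there is $v\in V$ with $v\le p$ and no $w\in V$ with $p\rhd w$. Flats: $U_i(v)=\{p\in S_V: p\rhd_i v\}$; for $v,w\in V$ put $v\sim_i w$ iff $U_i(v)\cap U_i(w)\neq\emptyset$, and let $\sim_i^c$ be the reflexive–transitive closure; the $i$-flat of $v$ is $F_i(v)=\overline{\bigcup_{w\sim_i^c v}U_i(w)}$ (topological closure), and an $i$-flat is any set of this form. For an $i$-flat $F$ let $V_F=F\cap V$ (the $\sim_i^c$-class of minima defining $F$). *)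

theory Defs
  imports "HOL-Analysis.Analysis"
begin

definition dom_le :: "real^'d \<Rightarrow> real^'d \<Rightarrow> bool" where
  "dom_le x y \<longleftrightarrow> (\<forall>i. x$i \<le> y$i)"

definition strict_dom :: "real^'d \<Rightarrow> real^'d \<Rightarrow> bool" where
  "strict_dom y x \<longleftrightarrow> (\<forall>i. y$i > x$i)"

definition dom_i :: "'d \<Rightarrow> real^'d \<Rightarrow> real^'d \<Rightarrow> bool" where
  "dom_i i y x \<longleftrightarrow> y$i = x$i \<and> (\<forall>j. j \<noteq> i \<longrightarrow> y$j > x$j)"

definition dom_antichain :: "(real^'d) set \<Rightarrow> bool" where
  "dom_antichain V \<longleftrightarrow> (\<forall>v\<in>V. \<forall>w\<in>V. dom_le v w \<longrightarrow> v = w)"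

definition orth_surface :: "(real^'d) set \<Rightarrow> (real^'d) set" where
  "orth_surface V = {p. (\<exists>v\<in>V. dom_le v p) \<and> \<not> (\<exists>w\<in>V. strict_dom p w)}"

definition U_flat :: "'d \<Rightarrow> (real^'d) set \<Rightarrow> real^'d \<Rightarrow> (real^'d) set" where
  "U_flat i V v = {p \<in> orth_surface V. dom_i i p v}"

definition sim_i :: "'d \<Rightarrow> (real^'d) set \<Rightarrow> ((real^'d) \<times> (real^'d)) set" where
  "sim_i i V = {(v, w). v \<in> V \<and> w \<in> V \<and> U_flat i V v \<inter> U_flat i V w \<noteq> {}}"

definition i_flat_of :: "'d \<Rightarrow> (real^'d) set \<Rightarrow> real^'d \<Rightarrow> (real^'d) set" where
  "i_flat_of i V v = closure (\<Union> {U_flat i V w | w. (v, w) \<in> (sim_i i V)\<^sup>*})"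

definition is_i_flat :: "'d \<Rightarrow> (real^'d) set \<Rightarrow> (real^'d) set \<Rightarrow> bool" where
  "is_i_flat i V F \<longleftrightarrow> (\<exists>v\<in>V. F = i_flat_of i V v)"

end

theory Submission
  imports Defs
begin

text \<open>
  An i-flat is the finite union of the closures of the sets U_i(w), w ranging over one
  equivalence class. The closure of U_i(w) is exactly the set of points p of the surface that
  lie between w and some q in U_i(w): given such q, the half-open segment from q to p stays in
  U_i(w); conversely, if p is a limit of U_i(w), then a point x of U_i(w) close enough to p
  strictly exceeds every minimum in each coordinate where p does, so the coordinatewise maximum
  of p and x is still on the surface and serves as q. Finally, a minimum v in the closure of
  U_i(w) dominates w, hence equals w by the antichain property.
\<close>

lemma dom_le_refl [simp]: "dom_le x x"
  unfolding dom_le_def by simp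

lemma dom_i_imp_dom_le: "dom_i i q v \<Longrightarrow> dom_le v q"
  unfolding dom_i_def dom_le_def by (metis less_imp_le order_refl)

lemma orth_surface_between:
  assumes "v \<in> V" "dom_le v y" "dom_le y q" "q \<in> orth_surface V"
  shows "y \<in> orth_surface V"
proof -
  have "\<not> strict_dom y w" if "w \<in> V" for w
  proof
    assume "strict_dom y w"
    with assms(3) have "strict_dom q w"
      unfolding strict_dom_def dom_le_def by (meson less_le_trans)
    with assms(4) that show False
      unfolding orth_surface_def by blast
  qed
  with assms(1,2) show ?thesis
    unfolding orth_surface_def by blast
qed

lemma closure_U_flat_subset:
  "closure (U_flat i V w) \<subseteq> {x. x$i = w$i \<and> dom_le w x}"
proof (rule closure_minimal)
  show "U_flat i V w \<subseteq> {x. x$i = w$i \<and> dom_le w x}"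
    unfolding U_flat_def using dom_i_imp_dom_le by (auto simp: dom_i_def)
  show "closed {x. x$i = w$i \<and> dom_le w x}"
    unfolding dom_le_def
    by (intro closed_Collect_conj closed_Collect_eq closed_Collect_all closed_Collect_le
        continuous_intros)
qed

lemma open_segment_subset_U_flat:
  assumes "v \<in> V" "q \<in> U_flat i V v" "dom_le v p" "dom_le p q"
  shows "open_segment p q \<subseteq> U_flat i V v"
proof
  fix x assume "x \<in> open_segment p q"
  then obtain u where u: "0 < u" "u < 1" and x: "x = (1 - u) *\<^sub>R p + u *\<^sub>R q"
    by (auto simp: in_segment)
  have q: "q \<in> orth_surface V" "dom_i i q v"
    using assms(2) unfolding U_flat_def by auto
  have vp: "v$j \<le> p$j" and pq: "p$j \<le> q$j" for j
    using assms(3,4) unfolding dom_le_def by auto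
  have xj: "x$j = p$j + u * (q$j - p$j)" for j
    unfolding x by (simp add: algebra_simps)
  have "dom_le x q"
    unfolding dom_le_def xj using u pq
    by (metis add.commute diff_add_cancel diff_ge_0_iff_ge le_diff_eq less_imp_le mult_left_le_one_le)
  moreover have "dom_le v x"
    unfolding dom_le_def xj using u vp pq by (smt (verit) mult_nonneg_nonneg)
  moreover have "dom_i i x v"
  proof -
    have "x$i = v$i"
      using vp[of i] pq[of i] q(2) unfolding xj dom_i_def by simp
    moreover have "v$j < x$j" if "j \<noteq> i" for j
    proof -
      have "v$j < q$j"
        using q(2) that unfolding dom_i_def by simp
      then show ?thesis
        unfolding xj using u vp[of j] pq[of j]
        by (smt (verit) mult_le_0_iff mult_less_cancel_right2)
    qed
    ultimately show ?thesis
      unfolding dom_i_def by blast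
  qed
  ultimately show "x \<in> U_flat i V v"
    using orth_surface_between[OF assms(1) _ _ q(1)] unfolding U_flat_def by blast
qed

lemma closure_U_flatI:
  assumes "v \<in> V" "q \<in> U_flat i V v" "dom_le v p" "dom_le p q"
  shows "p \<in> closure (U_flat i V v)"
proof (cases "p = q")
  case True
  with assms(2) show ?thesis
    using closure_subset by blast
next
  case False
  then have "p \<in> closure (open_segment p q)"
    by simp
  with closure_mono[OF open_segment_subset_U_flat[OF assms]] show ?thesis
    by blast
qed

lemma antichain_in_closure_U_flat_eq:
  assumes "dom_antichain V" "v \<in> V" "w \<in> V" "v \<in> closure (U_flat i V w)"
  shows "v = w"
  using assms closure_U_flat_subset unfolding dom_antichain_def by blast

lemma closure_U_flat_point_above_minima:
  assumes "finite V" "p \<in> closure (U_flat i V w)"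
  obtains x where "x \<in> U_flat i V w" "\<And>u j. u \<in> V \<Longrightarrow> u$j < p$j \<Longrightarrow> u$j < x$j"
proof -
  define N where "N = (\<Inter>u\<in>V. \<Inter>j\<in>{j. u$j < p$j}. {x :: real^'a. u$j < x$j})"
  have "open N"
    unfolding N_def using assms(1)
    by (intro open_INT ballI open_Collect_less continuous_intros) auto
  moreover have "p \<in> N"
    unfolding N_def by blast
  ultimately have "N \<inter> U_flat i V w \<noteq> {}"
    using assms(2) open_Int_closure_eq_empty by blast
  then show ?thesis
    using that unfolding N_def by blast
qed

lemma closure_U_flat_upper_bound:
  assumes "finite V" "w \<in> V" "p \<in> closure (U_flat i V w)"
  obtains q where "q \<in> orth_surface V" "dom_i i q w" "dom_le p q"
proof -
  obtain x where x: "x \<in> U_flat i V w"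
    and above: "\<And>u j. u \<in> V \<Longrightarrow> u$j < p$j \<Longrightarrow> u$j < x$j"
    using closure_U_flat_point_above_minima[OF assms(1,3)] by blast
  have xS: "x \<in> orth_surface V" and xw: "dom_i i x w"
    using x unfolding U_flat_def by auto
  have pi: "p$i = w$i"
    using assms(3) closure_U_flat_subset by blast
  define q where "q = (\<chi> j. max (p$j) (x$j))"
  have q: "q$j = max (p$j) (x$j)" for j
    unfolding q_def by simp
  have "dom_i i q w"
    using xw pi unfolding dom_i_def q by fastforce
  moreover have "dom_le p q" "dom_le x q"
    unfolding dom_le_def q by auto
  moreover have "\<not> strict_dom q u" if u: "u \<in> V" for u
  proof
    assume "strict_dom q u"
    then have "u$j < x$j" for j
      using above[OF u, of j] unfolding strict_dom_def q by (metis max_less_iff_conj less_max_iff_disj)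
    with xS u show False
      unfolding orth_surface_def strict_dom_def by blast
  qed
  ultimately show ?thesis
    using that assms(2) dom_i_imp_dom_le unfolding orth_surface_def by blast
qed

lemma closure_U_flat_iff:
  assumes "finite V" "w \<in> V"
  shows "p \<in> closure (U_flat i V w) \<longleftrightarrow>
    (\<exists>q \<in> orth_surface V. dom_i i q w \<and> dom_le w p \<and> dom_le p q)"
proof
  assume p: "p \<in> closure (U_flat i V w)"
  then have "dom_le w p"
    using closure_U_flat_subset by blast
  with closure_U_flat_upper_bound[OF assms p] show
    "\<exists>q \<in> orth_surface V. dom_i i q w \<and> dom_le w p \<and> dom_le p q"
    by blast
next
  assume "\<exists>q \<in> orth_surface V. dom_i i q w \<and> dom_le w p \<and> dom_le p q"
  then show "p \<in> closure (U_flat i V w)"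
    using closure_U_flatI[OF assms(2)] unfolding U_flat_def by blast
qed

lemma closure_UN_finite:
  "finite A \<Longrightarrow> closure (\<Union>x\<in>A. f x) = (\<Union>x\<in>A. closure (f x))"
  by (induction A rule: finite_induct) simp_all

lemma sim_i_class_subset:
  assumes "v \<in> V"
  shows "(sim_i i V)\<^sup>* `` {v} \<subseteq> V"
proof
  fix w assume "w \<in> (sim_i i V)\<^sup>* `` {v}"
  then have "(v, w) \<in> (sim_i i V)\<^sup>*"
    by simp
  then show "w \<in> V"
    by (induction rule: rtrancl_induct) (auto simp: assms sim_i_def)
qed

lemma i_flat_of_eq_UN_closure:
  assumes "finite V" "v \<in> V"
  shows "i_flat_of i V v = (\<Union>w\<in>(sim_i i V)\<^sup>* `` {v}. closure (U_flat i V w))"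
proof -
  have "finite ((sim_i i V)\<^sup>* `` {v})"
    using sim_i_class_subset[OF assms(2)] assms(1) finite_subset by blast
  moreover have "\<Union> {U_flat i V w | w. (v, w) \<in> (sim_i i V)\<^sup>*}
      = (\<Union>w\<in>(sim_i i V)\<^sup>* `` {v}. U_flat i V w)"
    by blast
  ultimately show ?thesis
    unfolding i_flat_of_def by (simp add: closure_UN_finite)
qed

theorem lemma4p3:
  fixes V :: "(real^'d) set" and p :: "real^'d" and F :: "(real^'d) set" and i :: 'd
  assumes "finite V" and "dom_antichain V"
    and "p \<in> orth_surface V"
    and "is_i_flat i V F"
  shows "p \<in> F \<longleftrightarrow>
    (\<exists>v \<in> F \<inter> V. \<exists>q \<in> orth_surface V. dom_i i q v \<and> dom_le v p \<and> dom_le p q)"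
proof -
  obtain v0 where v0: "v0 \<in> V" "F = i_flat_of i V v0"
    using assms(4) unfolding is_i_flat_def by blast
  define C where "C = (sim_i i V)\<^sup>* `` {v0}"
  have CV: "C \<subseteq> V"
    unfolding C_def using sim_i_class_subset[OF v0(1)] .
  have F: "F = (\<Union>w\<in>C. closure (U_flat i V w))"
    unfolding C_def v0(2) using i_flat_of_eq_UN_closure[OF assms(1) v0(1)] .
  show ?thesis
  proof
    assume "p \<in> F"
    then obtain w q where w: "w \<in> C" "w \<in> V"
      and q: "q \<in> orth_surface V" "dom_i i q w" "dom_le w p" "dom_le p q"
      using closure_U_flat_iff[OF assms(1)] CV unfolding F by blast
    then have "w \<in> closure (U_flat i V w)"
      using closure_U_flat_iff[OF assms(1) w(2)] dom_i_imp_dom_le by fastforce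
    with w(1) have "w \<in> F"
      unfolding F by blast
    with w q show "\<exists>v \<in> F \<inter> V. \<exists>q \<in> orth_surface V. dom_i i q v \<and> dom_le v p \<and> dom_le p q"
      by blast
  next
    assume "\<exists>v \<in> F \<inter> V. \<exists>q \<in> orth_surface V. dom_i i q v \<and> dom_le v p \<and> dom_le p q"
    then obtain v w where "v \<in> V" "w \<in> C" "v \<in> closure (U_flat i V w)"
      and "\<exists>q \<in> orth_surface V. dom_i i q v \<and> dom_le v p \<and> dom_le p q"
      unfolding F by blast
    moreover have "v = w"
      using antichain_in_closure_U_flat_eq[OF assms(2)] calculation CV by blast
    ultimately show "p \<in> F"
      using closure_U_flat_iff[OF assms(1)] unfolding F by blast
  qed
qed

end
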